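(* Let $C\ge1$, $k>2$ an integer, $\rho\in(0,1)$ and $M$ a positive integer. Set $\varepsilon_i=\rho/2^{i-1}$ and $C_i=\|p_{\varepsilon_i}\|_1$ for $i=1,\dots,M$; $C_{-1}=1$, $C_0=\frac{2+\rho^k}{2-\rho^k}$, $C_{M+1}=C_*$. Set $\rho_i=\frac{2\beta_i^k}{1+\beta_i^{2k}}$ with $\beta_i=\frac{1-\sqrt{1-\frac{\rho+\varepsilon_i}{1+\varepsilon_i}}}{1+\sqrt{1-\frac{\rho+\varepsilon_i}{1+\varepsilon_i}}}$ for $i=1,\dots,M$; $\rho_{-1}=\rho^k$, $\rho_0=\frac{\rho^k}{2-\rho^k}$, $\rho_{M+1}=\rho_*$. Then $$\tilde\rho(C)\le\max_{i\in\{-1,0,\dots,M\}}\max\Big(\frac{C-C_i}{C_{i+1}-C_i}\rho_{i+1}+\frac{C_{i+1}-C}{C_{i+1}-C_i}\rho_i,\ \rho_*\Big).$$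
   Context: $\mathbb{R}_k[X]$ denotes real polynomials of degree at most $k$, and $\|p\|_1$ is the sum of absolute values of the coefficients of $p$. For $C\ge1$, $\tilde\rho(C)=\min\{\max_{x\in[0,\rho]}|p(x)| : p\in\mathbb{R}_k[X],\ p(1)=1,\ \|p\|_1\le C\}$. $T_k$ is the Chebyshev polynomial of the first kind of degree $k$. For $\varepsilon\ge0$, $p_\varepsilon(X)=T_k\big(2\frac{X+\varepsilon}{\rho+\varepsilon}-1\big)/\big|T_k\big(2\frac{1+\varepsilon}{\rho+\varepsilon}-1\big)\big|$ (the minimizer of $\max_{[-\varepsilon,\rho]}|p|$ over $p\in\mathbb{R}_k[X]$ with $p(1)=1$). $C_*=\|p_0\|_1$, and $\rho_*=\frac{2\beta^k}{1+\beta^{2k}}$ with $\beta=\frac{1-\sqrt{1-\rho}}{1+\sqrt{1-\rho}}$. *)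

theory Defs
  imports "HOL-Computational_Algebra.Polynomial" "HOL-Analysis.Analysis"
begin

fun cheb :: "nat \<Rightarrow> real poly" where
  "cheb 0 = 1"
| "cheb (Suc 0) = [:0, 1:]"
| "cheb (Suc (Suc n)) = smult 2 [:0, 1:] * cheb (Suc n) - cheb n"

definition l1norm :: "real poly \<Rightarrow> real" where
  "l1norm p = (\<Sum>i\<le>degree p. \<bar>coeff p i\<bar>)"

definition rho_tilde :: "nat \<Rightarrow> real \<Rightarrow> real \<Rightarrow> real" where
  "rho_tilde k \<rho> C = Inf { Sup ((\<lambda>x. \<bar>poly p x\<bar>) ` {0..\<rho>}) | p.
      degree p \<le> k \<and> poly p 1 = 1 \<and> l1norm p \<le> C }"

definition p_eps :: "nat \<Rightarrow> real \<Rightarrow> real \<Rightarrow> real poly" where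
  "p_eps k \<rho> \<epsilon> = smult (1 / \<bar>poly (cheb k) (2 * (1 + \<epsilon>) / (\<rho> + \<epsilon>) - 1)\<bar>)
      (pcompose (cheb k) [: 2 * \<epsilon> / (\<rho> + \<epsilon>) - 1, 2 / (\<rho> + \<epsilon>) :])"

definition C_star :: "nat \<Rightarrow> real \<Rightarrow> real" where
  "C_star k \<rho> = l1norm (p_eps k \<rho> 0)"

definition beta_of :: "real \<Rightarrow> real" where
  "beta_of r = (1 - sqrt (1 - r)) / (1 + sqrt (1 - r))"

definition rho_star :: "nat \<Rightarrow> real \<Rightarrow> real" where
  "rho_star k \<rho> = 2 * beta_of \<rho> ^ k / (1 + beta_of \<rho> ^ (2 * k))"

definition eps_i :: "real \<Rightarrow> int \<Rightarrow> real" where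
  "eps_i \<rho> i = \<rho> / 2 ^ nat (i - 1)"

definition C_idx :: "nat \<Rightarrow> real \<Rightarrow> nat \<Rightarrow> int \<Rightarrow> real" where
  "C_idx k \<rho> M i =
     (if i = -1 then 1
      else if i = 0 then (2 + \<rho> ^ k) / (2 - \<rho> ^ k)
      else if i = int M + 1 then C_star k \<rho>
      else l1norm (p_eps k \<rho> (eps_i \<rho> i)))"

definition rho_idx :: "nat \<Rightarrow> real \<Rightarrow> nat \<Rightarrow> int \<Rightarrow> real" where
  "rho_idx k \<rho> M i =
     (if i = -1 then \<rho> ^ k
      else if i = 0 then \<rho> ^ k / (2 - \<rho> ^ k)
      else if i = int M + 1 then rho_star k \<rho>
      else 2 * beta_of ((\<rho> + eps_i \<rho> i) / (1 + eps_i \<rho> i)) ^ k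
             / (1 + beta_of ((\<rho> + eps_i \<rho> i) / (1 + eps_i \<rho> i)) ^ (2 * k)))"

end

theory Submission
  imports Defs
begin

text \<open>
  The constraint l1norm p \<le> C and the objective max over [0, \<rho>] of |p| are both convex in p, so
  a convex combination of a polynomial realising (C_i, \<rho>_i) and one realising (C_(i+1), \<rho>_(i+1))
  is admissible for every budget in between, with the linearly interpolated value. The pairs are
  realised by X^k, by (2 X^k - \<rho>^k) / (2 - \<rho>^k), and by the rescaled Chebyshev polynomials
  p_\<epsilon>, whose maximum 1 / T_k(2/r - 1) with r = (\<rho> + \<epsilon>) / (1 + \<epsilon>) is evaluated through
  T_k((z + 1/z) / 2) = (z^k + z^-k) / 2 at z = 1 / \<beta>(r).
  As C_-1 = 1 \<le> C, either C \<ge> C_* and p_0 itself gives \<rho>_*, or two consecutive C_i bracket C;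
  no monotonicity of the C_i is needed.
\<close>

lemma degree_pcompose_linear_le: "degree (pcompose p [:a, b:]) \<le> degree p"
proof -
  have "degree (pcompose p [:a, b:]) \<le> degree p * degree [:a, b:]"
    by (rule degree_pcompose_le)
  also have "\<dots> \<le> degree p"
    by (cases "b = 0") simp_all
  finally show ?thesis .
qed

lemma degree_cheb_le: "degree (cheb n) \<le> n"
proof (induction n rule: induct_nat_012)
  case (ge2 n)
  have "degree (smult 2 [:0, 1:] * cheb (Suc n)) \<le> Suc (Suc n)"
    using degree_mult_le[of "smult 2 [:0, 1:]" "cheb (Suc n)"] ge2(2) by simp
  with ge2(1) show ?case
    using degree_diff_le_max[of "smult 2 [:0, 1:] * cheb (Suc n)" "cheb n"] by simp
qed auto

lemma poly_cheb_cos: "poly (cheb n) (cos t) = cos (real n * t)"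
proof (induction n rule: induct_nat_012)
  case (ge2 n)
  have "cos (real (Suc (Suc n)) * t) + cos (real n * t) = 2 * cos t * cos (real (Suc n) * t)"
    using cos_add[of "real (Suc n) * t" t] cos_diff[of "real (Suc n) * t" t]
    by (simp add: algebra_simps)
  with ge2 show ?case by (simp add: algebra_simps)
qed auto

lemma abs_poly_cheb_le_1: "\<bar>y\<bar> \<le> 1 \<Longrightarrow> \<bar>poly (cheb n) y\<bar> \<le> 1"
  using poly_cheb_cos[of n "arccos y"] cos_arccos_abs[of y] by simp

lemma poly_cheb_joukowski:
  fixes z :: real
  assumes "z \<noteq> 0"
  shows "poly (cheb n) ((z + inverse z) / 2) = (z ^ n + inverse z ^ n) / 2"
proof (induction n rule: induct_nat_012)
  case (ge2 n)
  have "(z + inverse z) * (z ^ Suc n + inverse z ^ Suc n)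
        = z ^ Suc (Suc n) + inverse z ^ Suc (Suc n) + z ^ n + inverse z ^ n"
    using assms by (simp add: field_simps)
  with ge2 show ?case by (simp add: field_simps)
qed (simp_all add: assms)

lemma beta_of_pos:
  assumes "0 < r" "r < 1"
  shows "0 < beta_of r"
proof -
  have "0 \<le> sqrt (1 - r)" "sqrt (1 - r) < 1" using assms by simp_all
  then have "0 < 1 - sqrt (1 - r)" "0 < 1 + sqrt (1 - r)" by linarith+
  then show ?thesis unfolding beta_of_def by (rule divide_pos_pos)
qed

lemma joukowski_inverse_beta_of:
  assumes "0 < r" "r < 1"
  shows "(inverse (beta_of r) + beta_of r) / 2 = 2 / r - 1"
proof -
  define s where "s = sqrt (1 - r)"
  have s: "0 < s" "s < 1" "s * s = 1 - r"
    using assms by (auto simp: s_def)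
  have "inverse (beta_of r) + beta_of r = ((1 + s) * (1 + s) + (1 - s) * (1 - s)) / ((1 - s) * (1 + s))"
    using s(1,2) by (simp add: beta_of_def s_def[symmetric] field_simps)
  also have "\<dots> = 2 * (1 + s * s) / (1 - s * s)"
    by (simp add: algebra_simps)
  also have "\<dots> = 2 * (2 - r) / r"
    unfolding s(3) by simp
  finally show ?thesis using assms by (simp add: field_simps)
qed

definition cheb_level :: "nat \<Rightarrow> real \<Rightarrow> real" where
  "cheb_level k r = 2 * beta_of r ^ k / (1 + beta_of r ^ (2 * k))"

lemma poly_cheb_at_beta_of:
  assumes "0 < r" "r < 1"
  shows "poly (cheb k) (2 / r - 1) = 1 / cheb_level k r"
proof -
  define b where "b = beta_of r"
  have b: "0 < b" using beta_of_pos[OF assms] by (simp add: b_def)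
  have "2 / r - 1 = (inverse b + inverse (inverse b)) / 2"
    using joukowski_inverse_beta_of[OF assms] by (simp add: b_def)
  moreover have "poly (cheb k) ((inverse b + inverse (inverse b)) / 2)
      = (inverse b ^ k + inverse (inverse b) ^ k) / 2"
    using b by (intro poly_cheb_joukowski) simp
  ultimately have "poly (cheb k) (2 / r - 1) = (inverse b ^ k + inverse (inverse b) ^ k) / 2"
    by (simp only:)
  also have "\<dots> = (1 + b ^ k * b ^ k) / (2 * b ^ k)"
    using b by (simp add: field_simps)
  also have "b ^ k * b ^ k = b ^ (2 * k)"
    by (simp add: mult_2 power_add)
  finally show ?thesis by (simp add: cheb_level_def b_def)
qed

lemma cheb_level_pos: "0 < r \<Longrightarrow> r < 1 \<Longrightarrow> 0 < cheb_level k r"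
  using beta_of_pos[of r] by (simp add: cheb_level_def add_pos_pos)

lemma p_eps_eq_smult_cheb_level:
  assumes "0 \<le> \<epsilon>" "0 < \<rho>" "\<rho> < 1"
  shows "p_eps k \<rho> \<epsilon> = smult (cheb_level k ((\<rho> + \<epsilon>) / (1 + \<epsilon>)))
           (pcompose (cheb k) [: 2 * \<epsilon> / (\<rho> + \<epsilon>) - 1, 2 / (\<rho> + \<epsilon>) :])"
proof -
  define r where "r = (\<rho> + \<epsilon>) / (1 + \<epsilon>)"
  have r: "0 < r" "r < 1" using assms by (auto simp: r_def field_simps)
  have "2 * (1 + \<epsilon>) / (\<rho> + \<epsilon>) - 1 = 2 / r - 1" by (simp add: r_def)
  then have "1 / \<bar>poly (cheb k) (2 * (1 + \<epsilon>) / (\<rho> + \<epsilon>) - 1)\<bar> = cheb_level k r"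
    using poly_cheb_at_beta_of[OF r, of k] cheb_level_pos[OF r, of k] by simp
  then show ?thesis unfolding p_eps_def r_def by simp
qed

lemma degree_p_eps_le: "degree (p_eps k \<rho> \<epsilon>) \<le> k"
  unfolding p_eps_def
  by (rule order.trans[OF degree_smult_le order.trans[OF degree_pcompose_linear_le degree_cheb_le]])

lemma poly_p_eps_1:
  assumes "0 \<le> \<epsilon>" "0 < \<rho>" "\<rho> < 1"
  shows "poly (p_eps k \<rho> \<epsilon>) 1 = 1"
proof -
  define r where "r = (\<rho> + \<epsilon>) / (1 + \<epsilon>)"
  have r: "0 < r" "r < 1" using assms by (auto simp: r_def field_simps)
  have "2 * \<epsilon> / (\<rho> + \<epsilon>) - 1 + 2 / (\<rho> + \<epsilon>) = 2 / r - 1"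
    by (simp add: r_def add_divide_distrib[symmetric] algebra_simps)
  then have q1: "poly [: 2 * \<epsilon> / (\<rho> + \<epsilon>) - 1, 2 / (\<rho> + \<epsilon>) :] 1 = 2 / r - 1"
    by simp
  show ?thesis
    unfolding p_eps_eq_smult_cheb_level[OF assms] poly_smult poly_pcompose q1 r_def[symmetric]
    using poly_cheb_at_beta_of[OF r, of k] cheb_level_pos[OF r, of k] by simp
qed

lemma abs_poly_p_eps_le:
  assumes "0 \<le> \<epsilon>" "0 < \<rho>" "\<rho> < 1" "x \<in> {-\<epsilon>..\<rho>}"
  shows "\<bar>poly (p_eps k \<rho> \<epsilon>) x\<bar> \<le> cheb_level k ((\<rho> + \<epsilon>) / (1 + \<epsilon>))"
proof -
  define r where "r = (\<rho> + \<epsilon>) / (1 + \<epsilon>)"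
  have r: "0 < r" "r < 1" using assms by (auto simp: r_def field_simps)
  let ?q = "[: 2 * \<epsilon> / (\<rho> + \<epsilon>) - 1, 2 / (\<rho> + \<epsilon>) :]"
  have "poly ?q x = 2 * (x + \<epsilon>) / (\<rho> + \<epsilon>) - 1"
    by (simp add: add_divide_distrib algebra_simps)
  moreover have "0 \<le> 2 * (x + \<epsilon>) / (\<rho> + \<epsilon>)" "2 * (x + \<epsilon>) / (\<rho> + \<epsilon>) \<le> 2"
    using assms by (simp_all add: divide_le_eq)
  ultimately have "\<bar>poly (cheb k) (poly ?q x)\<bar> \<le> 1"
    by (intro abs_poly_cheb_le_1) simp
  then have "cheb_level k r * \<bar>poly (cheb k) (poly ?q x)\<bar> \<le> cheb_level k r"
    by (rule mult_left_le) (use cheb_level_pos[OF r, of k] in simp)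
  then show ?thesis
    unfolding p_eps_eq_smult_cheb_level[OF assms(1-3)] poly_smult poly_pcompose abs_mult
      r_def[symmetric] abs_of_pos[OF cheb_level_pos[OF r, of k]] .
qed

lemma l1norm_eq_sum_upto:
  assumes "degree p \<le> N"
  shows "l1norm p = (\<Sum>i\<le>N. \<bar>coeff p i\<bar>)"
  unfolding l1norm_def
  by (rule sum.mono_neutral_left) (use assms in \<open>auto simp: le_degree\<close>)

lemma l1norm_add_le: "l1norm (p + q) \<le> l1norm p + l1norm q"
proof -
  define N where "N = max (degree p) (degree q)"
  have N: "degree p \<le> N" "degree q \<le> N" "degree (p + q) \<le> N"
    unfolding N_def by (simp_all add: degree_add_le_max)
  have "l1norm (p + q) = (\<Sum>i\<le>N. \<bar>coeff p i + coeff q i\<bar>)"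
    by (simp add: l1norm_eq_sum_upto[OF N(3)])
  also have "\<dots> \<le> (\<Sum>i\<le>N. \<bar>coeff p i\<bar> + \<bar>coeff q i\<bar>)"
    by (intro sum_mono abs_triangle_ineq)
  also have "\<dots> = l1norm p + l1norm q"
    by (simp add: sum.distrib l1norm_eq_sum_upto[OF N(1)] l1norm_eq_sum_upto[OF N(2)])
  finally show ?thesis .
qed

lemma l1norm_smult: "l1norm (smult a p) = \<bar>a\<bar> * l1norm p"
  using l1norm_eq_sum_upto[OF degree_smult_le, of a p]
  by (simp add: l1norm_def abs_mult sum_distrib_left)

lemma l1norm_monom_add_const:
  assumes "0 < k"
  shows "l1norm (monom a k + [:b:]) = \<bar>a\<bar> + \<bar>b\<bar>"
proof -
  have deg: "degree (monom a k + [:b:]) \<le> k"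
    by (metis degree_add_le degree_monom_le degree_pCons_0 le0)
  have "l1norm (monom a k + [:b:])
      = (\<Sum>i\<le>k. (if i = k then \<bar>a\<bar> else 0) + (if i = 0 then \<bar>b\<bar> else 0))"
    unfolding l1norm_eq_sum_upto[OF deg]
    by (intro sum.cong) (use assms in \<open>auto simp: coeff_pCons split: nat.splits\<close>)
  then show ?thesis by (simp add: sum.distrib)
qed

definition admissible :: "nat \<Rightarrow> real \<Rightarrow> real \<Rightarrow> real \<Rightarrow> real poly \<Rightarrow> bool" where
  "admissible k \<rho> C r p \<longleftrightarrow>
     degree p \<le> k \<and> poly p 1 = 1 \<and> l1norm p \<le> C \<and> (\<forall>x\<in>{0..\<rho>}. \<bar>poly p x\<bar> \<le> r)"

lemma rho_tilde_le:
  assumes "admissible k \<rho> C r p" "0 \<le> \<rho>"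
  shows "rho_tilde k \<rho> C \<le> r"
proof -
  define S where "S = { Sup ((\<lambda>x. \<bar>poly q x\<bar>) ` {0..\<rho>}) | q.
      degree q \<le> k \<and> poly q 1 = 1 \<and> l1norm q \<le> C }"
  have bdd: "bdd_above ((\<lambda>x. \<bar>poly q x\<bar>) ` {0..\<rho>})" for q :: "real poly"
    by (intro bounded_imp_bdd_above compact_imp_bounded compact_continuous_image
        continuous_intros compact_Icc)
  have "bdd_below S"
  proof (rule bdd_belowI)
    fix s assume "s \<in> S"
    then obtain q where s: "s = Sup ((\<lambda>x. \<bar>poly q x\<bar>) ` {0..\<rho>})" unfolding S_def by blast
    have "\<bar>poly q 0\<bar> \<le> s" unfolding s by (rule cSup_upper) (use assms(2) bdd in auto)
    then show "0 \<le> s" by linarith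
  qed
  moreover have "Sup ((\<lambda>x. \<bar>poly p x\<bar>) ` {0..\<rho>}) \<in> S"
    using assms(1) unfolding S_def admissible_def by blast
  ultimately have "Inf S \<le> Sup ((\<lambda>x. \<bar>poly p x\<bar>) ` {0..\<rho>})" by (rule cInf_lower[rotated])
  also have "\<dots> \<le> r"
    by (rule cSup_least) (use assms in \<open>auto simp: admissible_def\<close>)
  finally show ?thesis unfolding rho_tilde_def S_def .
qed

lemma admissible_convex_comb:
  assumes "admissible k \<rho> C\<^sub>1 r\<^sub>1 p" "admissible k \<rho> C\<^sub>2 r\<^sub>2 q" "0 \<le> t" "t \<le> 1"
  shows "admissible k \<rho> (t * C\<^sub>1 + (1 - t) * C\<^sub>2) (t * r\<^sub>1 + (1 - t) * r\<^sub>2)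
           (smult t p + smult (1 - t) q)"
proof -
  let ?s = "smult t p + smult (1 - t) q"
  have "degree ?s \<le> k"
    using assms(1,2) unfolding admissible_def
    by (meson degree_add_le degree_smult_le le_trans)
  moreover have "l1norm ?s \<le> t * C\<^sub>1 + (1 - t) * C\<^sub>2"
  proof -
    have "l1norm ?s \<le> t * l1norm p + (1 - t) * l1norm q"
      using l1norm_add_le[of "smult t p" "smult (1 - t) q"] assms(3,4) by (simp add: l1norm_smult)
    also have "\<dots> \<le> t * C\<^sub>1 + (1 - t) * C\<^sub>2"
      using assms unfolding admissible_def by (intro add_mono mult_left_mono) auto
    finally show ?thesis .
  qed
  moreover have "\<bar>poly ?s x\<bar> \<le> t * r\<^sub>1 + (1 - t) * r\<^sub>2" if "x \<in> {0..\<rho>}" for x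
  proof -
    have "\<bar>poly ?s x\<bar> \<le> t * \<bar>poly p x\<bar> + (1 - t) * \<bar>poly q x\<bar>"
      using abs_triangle_ineq[of "t * poly p x" "(1 - t) * poly q x"] assms(3,4) by (simp add: abs_mult)
    also have "\<dots> \<le> t * r\<^sub>1 + (1 - t) * r\<^sub>2"
      using assms that unfolding admissible_def by (intro add_mono mult_left_mono) auto
    finally show ?thesis .
  qed
  moreover have "poly ?s 1 = 1"
    using assms(1,2) unfolding admissible_def by (simp add: algebra_simps)
  ultimately show ?thesis unfolding admissible_def by blast
qed

lemma rho_tilde_le_interpolation:
  assumes "admissible k \<rho> C\<^sub>1 r\<^sub>1 p" "admissible k \<rho> C\<^sub>2 r\<^sub>2 q" "C\<^sub>1 \<le> C" "C < C\<^sub>2" "0 \<le> \<rho>"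
  shows "rho_tilde k \<rho> C \<le> (C - C\<^sub>1) / (C\<^sub>2 - C\<^sub>1) * r\<^sub>2 + (C\<^sub>2 - C) / (C\<^sub>2 - C\<^sub>1) * r\<^sub>1"
proof -
  define t where "t = (C\<^sub>2 - C) / (C\<^sub>2 - C\<^sub>1)"
  have t: "0 \<le> t" "t \<le> 1" "1 - t = (C - C\<^sub>1) / (C\<^sub>2 - C\<^sub>1)"
    using assms(3,4) by (auto simp: t_def field_simps)
  have "t * (C\<^sub>2 - C\<^sub>1) = C\<^sub>2 - C"
    using assms(3,4) by (simp add: t_def)
  then have "t * C\<^sub>1 + (1 - t) * C\<^sub>2 = C"
    by (simp add: algebra_simps)
  then have "admissible k \<rho> C (t * r\<^sub>1 + (1 - t) * r\<^sub>2) (smult t p + smult (1 - t) q)"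
    using admissible_convex_comb[OF assms(1,2) t(1,2)] by simp
  from rho_tilde_le[OF this assms(5)] show ?thesis
    unfolding t(3) by (simp add: t_def)
qed

lemma admissible_monom:
  assumes "0 \<le> \<rho>"
  shows "admissible k \<rho> 1 (\<rho> ^ k) (monom 1 k)"
proof -
  have "\<bar>x ^ k\<bar> \<le> \<rho> ^ k" if "x \<in> {0..\<rho>}" for x :: real
    using that by (simp add: power_mono)
  then show ?thesis
    by (simp add: admissible_def l1norm_def degree_monom_eq poly_monom)
qed

lemma admissible_equioscillating_monom:
  assumes "0 \<le> \<rho>" "\<rho> < 1" "0 < k"
  shows "admissible k \<rho> ((2 + \<rho> ^ k) / (2 - \<rho> ^ k)) (\<rho> ^ k / (2 - \<rho> ^ k))
           (monom (2 / (2 - \<rho> ^ k)) k + [: - (\<rho> ^ k) / (2 - \<rho> ^ k) :])"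
proof -
  define R where "R = \<rho> ^ k"
  have R: "0 \<le> R" "R < 1" unfolding R_def using assms by (simp_all add: power_less_one_iff)
  define p where "p = monom (2 / (2 - R)) k + [: - R / (2 - R) :]"
  have "degree p \<le> k" unfolding p_def
    by (metis degree_add_le degree_monom_le degree_pCons_0 le0)
  moreover have "l1norm p = (2 + R) / (2 - R)"
    using R unfolding p_def l1norm_monom_add_const[OF assms(3)] by (simp add: add_divide_distrib)
  moreover have poly_p: "poly p x = (2 * x ^ k - R) / (2 - R)" for x
    unfolding p_def by (simp add: poly_monom diff_divide_distrib)
  moreover have "\<bar>poly p x\<bar> \<le> R / (2 - R)" if "x \<in> {0..\<rho>}" for x
  proof -
    have "0 \<le> x ^ k" "x ^ k \<le> R" using that unfolding R_def by (auto intro: power_mono)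
    then have "\<bar>2 * x ^ k - R\<bar> \<le> R" by linarith
    then show ?thesis using R unfolding poly_p by (simp add: divide_right_mono)
  qed
  ultimately have "admissible k \<rho> ((2 + R) / (2 - R)) (R / (2 - R)) p"
    using R by (simp add: admissible_def)
  then show ?thesis unfolding p_def R_def .
qed

lemma admissible_p_eps:
  assumes "0 \<le> \<epsilon>" "0 < \<rho>" "\<rho> < 1"
  shows "admissible k \<rho> (l1norm (p_eps k \<rho> \<epsilon>)) (cheb_level k ((\<rho> + \<epsilon>) / (1 + \<epsilon>)))
           (p_eps k \<rho> \<epsilon>)"
  using degree_p_eps_le poly_p_eps_1[OF assms] abs_poly_p_eps_le[OF assms] assms(1)
  by (auto simp: admissible_def)

lemma exists_admissible_C_idx:
  assumes "0 < k" "0 < \<rho>" "\<rho> < 1"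
  shows "\<exists>p. admissible k \<rho> (C_idx k \<rho> M j) (rho_idx k \<rho> M j) p"
proof -
  have rho_idx_eq: "rho_idx k \<rho> M j = cheb_level k ((\<rho> + eps_i \<rho> j) / (1 + eps_i \<rho> j))"
    if "j \<noteq> -1" "j \<noteq> 0" "j \<noteq> int M + 1"
    using that by (simp add: rho_idx_def cheb_level_def)
  consider "j = -1" | "j = 0" | "j = int M + 1" | "j \<noteq> -1" "j \<noteq> 0" "j \<noteq> int M + 1"
    by blast
  then show ?thesis
  proof cases
    case 1
    then show ?thesis
      using admissible_monom[of \<rho> k] assms(2) by (auto simp: C_idx_def rho_idx_def)
  next
    case 2
    then show ?thesis
      using admissible_equioscillating_monom[of \<rho> k] assms by (auto simp: C_idx_def rho_idx_def)
  next
    case 3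
    then show ?thesis
      using admissible_p_eps[of 0 \<rho> k] assms(2,3)
      by (auto simp: C_idx_def rho_idx_def C_star_def rho_star_def cheb_level_def)
  next
    case 4
    have "0 \<le> eps_i \<rho> j" using assms(2) by (simp add: eps_i_def)
    then show ?thesis
      using admissible_p_eps[of "eps_i \<rho> j" \<rho> k] assms(2,3) 4 rho_idx_eq[OF 4]
      by (auto simp: C_idx_def)
  qed
qed

lemma exists_crossing_index:
  fixes c :: "int \<Rightarrow> real"
  assumes "a \<le> b" "c a \<le> C" "C < c (b + 1)"
  shows "\<exists>i\<in>{a..b}. c i \<le> C \<and> C < c (i + 1)"
  using assms(1,3)
proof (induction b rule: int_ge_induct)
  case base
  then show ?case using assms(2) by auto
next
  case (step b)
  show ?case
  proof (cases "c (b + 1) \<le> C")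
    case True
    then show ?thesis using step.hyps step.prems by auto
  next
    case False
    then obtain i where "i \<in> {a..b}" "c i \<le> C \<and> C < c (i + 1)"
      using step.IH by force
    then show ?thesis by auto
  qed
qed

lemma rho_tilde_le_Max_interpolation:
  fixes c r :: "int \<Rightarrow> real"
  assumes "a \<le> b" "c a \<le> C" "0 \<le> \<rho>"
    and admissible_at: "\<And>j. j \<in> {a..b + 1} \<Longrightarrow> \<exists>p. admissible k \<rho> (c j) (r j) p"
    and last_le: "r (b + 1) \<le> r\<^sub>0"
  shows "rho_tilde k \<rho> C \<le> Max ((\<lambda>i. max ((C - c i) / (c (i + 1) - c i) * r (i + 1)
           + (c (i + 1) - C) / (c (i + 1) - c i) * r i) r\<^sub>0) ` {a..b})"
    (is "_ \<le> Max (?F ` _)")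
proof -
  have F_le_Max: "?F i \<le> Max (?F ` {a..b})" if "i \<in> {a..b}" for i
    using that by (intro Max_ge) auto
  show ?thesis
  proof (cases "c (b + 1) \<le> C")
    case True
    obtain p where "admissible k \<rho> (c (b + 1)) (r (b + 1)) p"
      using admissible_at[of "b + 1"] assms(1) by auto
    with True last_le have "admissible k \<rho> C r\<^sub>0 p"
      by (auto simp: admissible_def)
    with assms(3) have "rho_tilde k \<rho> C \<le> ?F a"
      by (auto dest: rho_tilde_le)
    then show ?thesis by (rule order.trans[OF _ F_le_Max]) (use assms(1) in simp)
  next
    case False
    then obtain i where i: "i \<in> {a..b}" "c i \<le> C" "C < c (i + 1)"
      using exists_crossing_index[of a b c C] assms(1,2) by auto
    obtain p q where "admissible k \<rho> (c i) (r i) p" "admissible k \<rho> (c (i + 1)) (r (i + 1)) q"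
      using admissible_at[of i] admissible_at[of "i + 1"] i(1) by auto
    from rho_tilde_le_interpolation[OF this i(2,3) assms(3)] have "rho_tilde k \<rho> C \<le> ?F i"
      by simp
    then show ?thesis by (rule order.trans[OF _ F_le_Max[OF i(1)]])
  qed
qed

theorem proposition5:
  fixes C \<rho> :: real and k M :: nat
  assumes "C \<ge> 1" and "k > 2" and "0 < \<rho>" and "\<rho> < 1" and "M > 0"
  shows "rho_tilde k \<rho> C \<le>
    Max ((\<lambda>i. max ((C - C_idx k \<rho> M i) / (C_idx k \<rho> M (i + 1) - C_idx k \<rho> M i) * rho_idx k \<rho> M (i + 1)
                     + (C_idx k \<rho> M (i + 1) - C) / (C_idx k \<rho> M (i + 1) - C_idx k \<rho> M i) * rho_idx k \<rho> M i)
                    (rho_star k \<rho>)) ` {-1 .. int M})"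
  by (rule rho_tilde_le_Max_interpolation)
    (use assms exists_admissible_C_idx in \<open>auto simp: C_idx_def rho_idx_def\<close>)

end
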